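(* Let $M$ be a locally principally quasi-retractable right $R$-module with $S=\mathrm{End}_R(M)$. If $S$ is a left centrally AIP ring, then $M$ is a centrally endo-AIP module.
   Context: For $X\subseteq M$, $l_S(X)=\{\phi\in S:\phi(X)=0\}$; for $I\subseteq S$, $r_M(I)=\{m\in M: I m=0\}$, and for $T\subseteq S$, $l_S(T)=\{f\in S: fT=0\}$. $M$ is locally principally quasi-retractable if for every principal ideal $I$ of $S$ with $r_M(I)\neq 0$ there is a nonzero $\psi\in S$ with $r_M(I)=\psi(M)$. An ideal $J$ of $S$ is centrally s-unital if for every $a\in J$ there is $z\in J$ central in $S$ with $az=a$. $S$ is left centrally AIP if $l_S(T)$ is centrally s-unital for every ideal $T$ of $S$. $M$ is centrally endo-AIP if $l_S(N)$ is a centrally s-unital ideal of $S$ for every fully invariant submodule $N$ of $M$. *)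

theory Defs
  imports Main
begin

text \<open>A right R-module: the abelian group 'm (whole type) with a right scalar action
  smult :: 'm => 'r => 'm, R a (not necessarily commutative) ring with 1.\<close>

definition right_module :: "('m::ab_group_add \<Rightarrow> 'r::ring_1 \<Rightarrow> 'm) \<Rightarrow> bool" where
  "right_module smult \<longleftrightarrow>
     (\<forall>x y r. smult (x + y) r = smult x r + smult y r) \<and>
     (\<forall>x r s. smult x (r + s) = smult x r + smult x s) \<and>
     (\<forall>x r s. smult x (r * s) = smult (smult x r) s) \<and>
     (\<forall>x. smult x 1 = x)"

text \<open>S = End_R(M), with addition pointwise, multiplication = composition
  (endomorphisms act on the left, so the product f g is f \<circ> g), zero = (\<lambda>_. 0).\<close>

definition End :: "('m::ab_group_add \<Rightarrow> 'r::ring_1 \<Rightarrow> 'm) \<Rightarrow> ('m \<Rightarrow> 'm) set" where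
  "End smult = {f. (\<forall>x y. f (x + y) = f x + f y) \<and> (\<forall>x r. f (smult x r) = smult (f x) r)}"

definition End_ideal :: "('m::ab_group_add \<Rightarrow> 'r::ring_1 \<Rightarrow> 'm) \<Rightarrow> ('m \<Rightarrow> 'm) set \<Rightarrow> bool" where
  "End_ideal smult I \<longleftrightarrow> I \<subseteq> End smult \<and> (\<lambda>_. 0) \<in> I \<and>
     (\<forall>a\<in>I. \<forall>b\<in>I. (\<lambda>x. a x - b x) \<in> I) \<and>
     (\<forall>s\<in>End smult. \<forall>a\<in>I. s \<circ> a \<in> I \<and> a \<circ> s \<in> I)"

definition End_principal_ideal_gen :: "('m::ab_group_add \<Rightarrow> 'r::ring_1 \<Rightarrow> 'm) \<Rightarrow> ('m \<Rightarrow> 'm) \<Rightarrow> ('m \<Rightarrow> 'm) set" where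
  "End_principal_ideal_gen smult a = \<Inter>{I. End_ideal smult I \<and> a \<in> I}"

definition End_principal_ideal :: "('m::ab_group_add \<Rightarrow> 'r::ring_1 \<Rightarrow> 'm) \<Rightarrow> ('m \<Rightarrow> 'm) set \<Rightarrow> bool" where
  "End_principal_ideal smult I \<longleftrightarrow> (\<exists>a\<in>End smult. I = End_principal_ideal_gen smult a)"

definition r_M :: "('m::zero \<Rightarrow> 'm) set \<Rightarrow> 'm set" where
  "r_M I = {m. \<forall>\<phi>\<in>I. \<phi> m = 0}"

definition l_S_mod :: "('m::ab_group_add \<Rightarrow> 'r::ring_1 \<Rightarrow> 'm) \<Rightarrow> 'm set \<Rightarrow> ('m \<Rightarrow> 'm) set" where
  "l_S_mod smult X = {\<phi>\<in>End smult. \<forall>x\<in>X. \<phi> x = 0}"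

definition l_S_ring :: "('m::ab_group_add \<Rightarrow> 'r::ring_1 \<Rightarrow> 'm) \<Rightarrow> ('m \<Rightarrow> 'm) set \<Rightarrow> ('m \<Rightarrow> 'm) set" where
  "l_S_ring smult T = {f\<in>End smult. \<forall>t\<in>T. f \<circ> t = (\<lambda>_. 0)}"

definition locally_principally_quasi_retractable :: "('m::ab_group_add \<Rightarrow> 'r::ring_1 \<Rightarrow> 'm) \<Rightarrow> bool" where
  "locally_principally_quasi_retractable smult \<longleftrightarrow>
     (\<forall>I. End_principal_ideal smult I \<and> r_M I \<noteq> {0} \<longrightarrow>
        (\<exists>\<psi>\<in>End smult. \<psi> \<noteq> (\<lambda>_. 0) \<and> r_M I = range \<psi>))"

definition End_central :: "('m::ab_group_add \<Rightarrow> 'r::ring_1 \<Rightarrow> 'm) \<Rightarrow> ('m \<Rightarrow> 'm) \<Rightarrow> bool" where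
  "End_central smult z \<longleftrightarrow> z \<in> End smult \<and> (\<forall>s\<in>End smult. z \<circ> s = s \<circ> z)"

definition centrally_s_unital :: "('m::ab_group_add \<Rightarrow> 'r::ring_1 \<Rightarrow> 'm) \<Rightarrow> ('m \<Rightarrow> 'm) set \<Rightarrow> bool" where
  "centrally_s_unital smult J \<longleftrightarrow> (\<forall>a\<in>J. \<exists>z\<in>J. End_central smult z \<and> a \<circ> z = a)"

definition left_centrally_AIP :: "('m::ab_group_add \<Rightarrow> 'r::ring_1 \<Rightarrow> 'm) \<Rightarrow> bool" where
  "left_centrally_AIP smult \<longleftrightarrow>
     (\<forall>T. End_ideal smult T \<longrightarrow> centrally_s_unital smult (l_S_ring smult T))"

definition submodule :: "('m::ab_group_add \<Rightarrow> 'r::ring_1 \<Rightarrow> 'm) \<Rightarrow> 'm set \<Rightarrow> bool" where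
  "submodule smult N \<longleftrightarrow> 0 \<in> N \<and> (\<forall>x\<in>N. \<forall>y\<in>N. x - y \<in> N) \<and> (\<forall>x\<in>N. \<forall>r. smult x r \<in> N)"

definition fully_invariant :: "('m::ab_group_add \<Rightarrow> 'r::ring_1 \<Rightarrow> 'm) \<Rightarrow> 'm set \<Rightarrow> bool" where
  "fully_invariant smult N \<longleftrightarrow> submodule smult N \<and> (\<forall>\<phi>\<in>End smult. \<phi> ` N \<subseteq> N)"

definition centrally_endo_AIP :: "('m::ab_group_add \<Rightarrow> 'r::ring_1 \<Rightarrow> 'm) \<Rightarrow> bool" where
  "centrally_endo_AIP smult \<longleftrightarrow>
     (\<forall>N. fully_invariant smult N \<longrightarrow>
        End_ideal smult (l_S_mod smult N) \<and> centrally_s_unital smult (l_S_mod smult N))"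

end

theory Submission
  imports Defs
begin

text \<open>
  Let \<open>a \<in> l\<^sub>S(N)\<close> and \<open>I = SaS\<close>. Then \<open>N \<subseteq> r\<^sub>M(I)\<close> and \<open>a\<close> annihilates \<open>r\<^sub>M(I)\<close>, so it suffices
  to find a central unit for \<open>a\<close> inside \<open>l\<^sub>S(r\<^sub>M(I))\<close>. If \<open>r\<^sub>M(I) = 0\<close> the identity does.
  Otherwise \<open>r\<^sub>M(I) = \<psi>(M)\<close>, and for the ideal \<open>T\<close> of endomorphisms with image in \<open>\<psi>(M)\<close>
  (an ideal because \<open>r\<^sub>M(I)\<close> is fully invariant) we have \<open>l\<^sub>S(T) = l\<^sub>S(\<psi>(M))\<close>, since \<open>\<psi> \<in> T\<close>;
  the left centrally AIP property of \<open>S\<close> applied to \<open>T\<close> provides the central unit.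
\<close>

lemma End_add: "f \<in> End smult \<Longrightarrow> f (x + y) = f x + f y"
  unfolding End_def by blast

lemma End_smult: "f \<in> End smult \<Longrightarrow> f (smult x r) = smult (f x) r"
  unfolding End_def by blast

lemma End_zero: "f \<in> End smult \<Longrightarrow> f 0 = 0"
  by (metis End_add add_cancel_right_right)

lemma End_diff: "f \<in> End smult \<Longrightarrow> f (x - y) = f x - f y"
  by (metis End_add add_diff_cancel diff_add_cancel)

lemma right_module_smult_diff:
  "right_module smult \<Longrightarrow> smult (x - y) r = smult x r - smult y r"
  unfolding right_module_def by (metis add_diff_cancel diff_add_cancel)

lemma right_module_zero_smult: "right_module smult \<Longrightarrow> smult 0 r = 0"
  using right_module_smult_diff[of smult 0 0] by simp

lemma End_diff_closed:
  "right_module smult \<Longrightarrow> a \<in> End smult \<Longrightarrow> b \<in> End smult \<Longrightarrow> (\<lambda>x. a x - b x) \<in> End smult"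
  unfolding End_def by (auto simp: right_module_smult_diff algebra_simps)

lemma End_zero_closed: "right_module smult \<Longrightarrow> (\<lambda>_. 0) \<in> End smult"
  unfolding End_def by (simp add: right_module_zero_smult)

lemma End_comp_closed: "a \<in> End smult \<Longrightarrow> b \<in> End smult \<Longrightarrow> a \<circ> b \<in> End smult"
  unfolding End_def by auto

lemma End_id: "id \<in> End smult"
  unfolding End_def by auto

lemma End_central_id: "End_central smult id"
  unfolding End_central_def using End_id by auto

lemma l_S_mod_zero: "l_S_mod smult {0} = End smult"
  unfolding l_S_mod_def using End_zero by auto

lemma centrally_s_unital_l_S_mod_zero: "centrally_s_unital smult (l_S_mod smult {0})"
  unfolding centrally_s_unital_def l_S_mod_zero using End_id End_central_id by fastforce

lemma End_ideal_End: "right_module smult \<Longrightarrow> End_ideal smult (End smult)"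
  unfolding End_ideal_def using End_diff_closed End_zero_closed End_comp_closed by blast

lemma End_ideal_Inter:
  assumes "\<And>I. I \<in> \<I> \<Longrightarrow> End_ideal smult I" and "\<I> \<noteq> {}"
  shows "End_ideal smult (\<Inter>\<I>)"
  using assms unfolding End_ideal_def by blast

lemma End_ideal_principal_ideal_gen:
  assumes "right_module smult" and "a \<in> End smult"
  shows "End_ideal smult (End_principal_ideal_gen smult a)"
  unfolding End_principal_ideal_gen_def
  using assms End_ideal_End by (intro End_ideal_Inter) auto

lemma principal_ideal_gen_mem: "a \<in> End_principal_ideal_gen smult a"
  unfolding End_principal_ideal_gen_def by auto

lemma principal_ideal_gen_least:
  "End_ideal smult J \<Longrightarrow> a \<in> J \<Longrightarrow> End_principal_ideal_gen smult a \<subseteq> J"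
  unfolding End_principal_ideal_gen_def by auto

lemma End_principal_ideal_imp_End_ideal:
  "right_module smult \<Longrightarrow> End_principal_ideal smult I \<Longrightarrow> End_ideal smult I"
  unfolding End_principal_ideal_def using End_ideal_principal_ideal_gen by blast

lemma l_S_mod_antimono: "X \<subseteq> Y \<Longrightarrow> l_S_mod smult Y \<subseteq> l_S_mod smult X"
  unfolding l_S_mod_def by auto

lemma fully_invariant_End_mem:
  "fully_invariant smult N \<Longrightarrow> s \<in> End smult \<Longrightarrow> x \<in> N \<Longrightarrow> s x \<in> N"
  unfolding fully_invariant_def by blast

lemma End_ideal_l_S_mod:
  assumes "right_module smult" and "fully_invariant smult N"
  shows "End_ideal smult (l_S_mod smult N)"
  unfolding End_ideal_def l_S_mod_def
  using End_diff_closed[OF assms(1)] End_zero_closed[OF assms(1)] End_comp_closed End_zero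
    fully_invariant_End_mem[OF assms(2)]
  by auto

lemma fully_invariant_r_M:
  assumes "right_module smult" and "End_ideal smult I"
  shows "fully_invariant smult (r_M I)"
proof -
  have I_End: "\<And>\<phi>. \<phi> \<in> I \<Longrightarrow> \<phi> \<in> End smult"
    and I_comp: "\<And>\<phi> s. \<phi> \<in> I \<Longrightarrow> s \<in> End smult \<Longrightarrow> \<phi> \<circ> s \<in> I"
    using assms(2) unfolding End_ideal_def by auto
  have "s m \<in> r_M I" if s: "s \<in> End smult" and m: "m \<in> r_M I" for s m
  proof -
    have "(\<phi> \<circ> s) m = 0" if "\<phi> \<in> I" for \<phi>
      using I_comp[OF that s] m unfolding r_M_def by blast
    then show ?thesis
      unfolding r_M_def by simp
  qed
  moreover have "submodule smult (r_M I)"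
    unfolding submodule_def r_M_def
    by (auto simp: I_End End_zero[OF I_End] End_diff[OF I_End] End_smult
        right_module_zero_smult[OF assms(1)])
  ultimately show ?thesis
    unfolding fully_invariant_def by auto
qed

definition End_into :: "('m::ab_group_add \<Rightarrow> 'r::ring_1 \<Rightarrow> 'm) \<Rightarrow> 'm set \<Rightarrow> ('m \<Rightarrow> 'm) set" where
  "End_into smult N = {t \<in> End smult. range t \<subseteq> N}"

lemma End_ideal_End_into:
  assumes "right_module smult" and "fully_invariant smult N"
  shows "End_ideal smult (End_into smult N)"
proof -
  have "0 \<in> N" and "\<And>x y. x \<in> N \<Longrightarrow> y \<in> N \<Longrightarrow> x - y \<in> N"
    using assms(2) unfolding fully_invariant_def submodule_def by auto
  then show ?thesis
    unfolding End_ideal_def End_into_def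
    using End_diff_closed[OF assms(1)] End_zero_closed[OF assms(1)] End_comp_closed
      fully_invariant_End_mem[OF assms(2)]
    by (auto simp: image_subset_iff)
qed

lemma l_S_mod_subset_l_S_ring_End_into: "l_S_mod smult N \<subseteq> l_S_ring smult (End_into smult N)"
  unfolding l_S_mod_def l_S_ring_def End_into_def by (auto simp: fun_eq_iff image_subset_iff)

lemma l_S_ring_End_into_range:
  assumes "\<psi> \<in> End smult"
  shows "l_S_ring smult (End_into smult (range \<psi>)) = l_S_mod smult (range \<psi>)"
proof
  have "\<psi> \<in> End_into smult (range \<psi>)"
    using assms unfolding End_into_def by auto
  then show "l_S_ring smult (End_into smult (range \<psi>)) \<subseteq> l_S_mod smult (range \<psi>)"
    unfolding l_S_ring_def l_S_mod_def by (auto simp: fun_eq_iff)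
qed (rule l_S_mod_subset_l_S_ring_End_into)

lemma centrally_s_unital_l_S_mod_range:
  assumes "right_module smult" and "left_centrally_AIP smult"
    and "\<psi> \<in> End smult" and "fully_invariant smult (range \<psi>)"
  shows "centrally_s_unital smult (l_S_mod smult (range \<psi>))"
  using assms(2) End_ideal_End_into[OF assms(1,4)] l_S_ring_End_into_range[OF assms(3)]
  unfolding left_centrally_AIP_def by metis

lemma centrally_s_unital_l_S_mod_r_M_principal:
  assumes "right_module smult" and "locally_principally_quasi_retractable smult"
    and "left_centrally_AIP smult" and "End_principal_ideal smult I"
  shows "centrally_s_unital smult (l_S_mod smult (r_M I))"
proof (cases "r_M I = {0}")
  case True
  then show ?thesis
    using centrally_s_unital_l_S_mod_zero by simp
next
  case False
  then obtain \<psi> where \<psi>: "\<psi> \<in> End smult" and r_M_eq: "r_M I = range \<psi>"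
    using assms(2,4) unfolding locally_principally_quasi_retractable_def by blast
  have "fully_invariant smult (range \<psi>)"
    using fully_invariant_r_M[OF assms(1) End_principal_ideal_imp_End_ideal[OF assms(1,4)]]
    unfolding r_M_eq .
  with \<psi> show ?thesis
    unfolding r_M_eq by (rule centrally_s_unital_l_S_mod_range[OF assms(1,3)])
qed

theorem proposition3p5:
  fixes smult :: "'m::ab_group_add \<Rightarrow> 'r::ring_1 \<Rightarrow> 'm"
  assumes "right_module smult"
    and "locally_principally_quasi_retractable smult"
    and "left_centrally_AIP smult"
  shows "centrally_endo_AIP smult"
  unfolding centrally_endo_AIP_def
proof (intro allI impI conjI)
  fix N assume N: "fully_invariant smult N"
  show ideal: "End_ideal smult (l_S_mod smult N)"
    using End_ideal_l_S_mod[OF assms(1) N] .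
  show "centrally_s_unital smult (l_S_mod smult N)"
    unfolding centrally_s_unital_def
  proof
    fix a assume a: "a \<in> l_S_mod smult N"
    define I where "I = End_principal_ideal_gen smult a"
    have "I \<subseteq> l_S_mod smult N"
      unfolding I_def using principal_ideal_gen_least[OF ideal a] .
    then have N_sub: "N \<subseteq> r_M I"
      unfolding r_M_def l_S_mod_def by auto
    have "a \<in> l_S_mod smult (r_M I)"
      using a principal_ideal_gen_mem[of a smult] unfolding I_def r_M_def l_S_mod_def by auto
    moreover have "End_principal_ideal smult I"
      unfolding End_principal_ideal_def I_def using a unfolding l_S_mod_def by auto
    ultimately obtain z where "z \<in> l_S_mod smult (r_M I)" "End_central smult z" "a \<circ> z = a"
      using centrally_s_unital_l_S_mod_r_M_principal[OF assms] unfolding centrally_s_unital_def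
      by blast
    then show "\<exists>z\<in>l_S_mod smult N. End_central smult z \<and> a \<circ> z = a"
      using l_S_mod_antimono[OF N_sub] by blast
  qed
qed

end
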